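(* Let $A$ and $B$ be independent discrete random variables taking values in $\mathbb{R}^d$, with characteristic functions $\hat p_\alpha(t)=\mathbf{E}[\exp\{i t^{\mathrm T}A\}]$ and $\hat p_\beta(t)=\mathbf{E}[\exp\{i t^{\mathrm T}B\}]$. Then $$\varepsilon_{01}(A,B) \;=\; \lim_{\tau_1\to\infty}\lim_{\tau_2\to\infty}\cdots\lim_{\tau_d\to\infty}\Big(\prod_{j=1}^d \frac{1}{2\tau_j}\Big)\int_{B(\tau)}\lvert \hat p_\alpha(t)-\hat p_\beta(t)\rvert^2\,\lambda(\mathrm{d}t),$$ where $B(\tau)=\{x\in\mathbb{R}^d : -\tau_j\le x_j\le \tau_j \text{ for all } j\}$ and $\lambda$ is Lebesgue measure.
   Context: Discrete energy distance: for independent random variables $A,B$ taking values in a set on which equality is defined, $\varepsilon_{01}(A,B) = 2\mathbf{E}[1\{A\neq B\}] - \mathbf{E}[1\{A\neq A'\}] - \mathbf{E}[1\{B\neq B'\}]$, where $A'$ is an independent copy of $A$ (i.i.d. with $A$), $B'$ is an independent copy of $B$, and $1\{\cdot\}$ is the indicator function. *)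

theory Defs
  imports "HOL-Probability.Probability"
begin

text \<open>Points of R^d are represented as functions nat => real supported
  (extensionally) on the index set {..<d}; the Lebesgue measure on R^d is
  the product measure PiM {..<d} (\<lambda>_. lborel).\<close>

definition inner_d :: "nat \<Rightarrow> (nat \<Rightarrow> real) \<Rightarrow> (nat \<Rightarrow> real) \<Rightarrow> real" where
  "inner_d d t x = (\<Sum>j<d. t j * x j)"

definition char_fun :: "nat \<Rightarrow> (nat \<Rightarrow> real) pmf \<Rightarrow> (nat \<Rightarrow> real) \<Rightarrow> complex" where
  "char_fun d p t = measure_pmf.expectation p (\<lambda>x. cis (inner_d d t x))"

definition eps01 :: "'a pmf \<Rightarrow> 'a pmf \<Rightarrow> real" where
  "eps01 p q =
     2 * measure_pmf.expectation (pair_pmf p q) (\<lambda>(a, b). if a \<noteq> b then 1 else 0)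
     - measure_pmf.expectation (pair_pmf p p) (\<lambda>(a, a'). if a \<noteq> a' then 1 else 0)
     - measure_pmf.expectation (pair_pmf q q) (\<lambda>(b, b'). if b \<noteq> b' then 1 else 0)"

definition box_d :: "nat \<Rightarrow> (nat \<Rightarrow> real) \<Rightarrow> (nat \<Rightarrow> real) set" where
  "box_d d \<tau> = PiE {..<d} (\<lambda>j. {- \<tau> j .. \<tau> j})"

text \<open>Iterated limit: iter_lim n k F tau L means
  lim_{tau_k -> oo} lim_{tau_(k+1) -> oo} ... lim_{tau_(k+n-1) -> oo} F tau = L,
  where the remaining coordinates of tau are held fixed.\<close>
fun iter_lim :: "nat \<Rightarrow> nat \<Rightarrow> ((nat \<Rightarrow> real) \<Rightarrow> real) \<Rightarrow> (nat \<Rightarrow> real) \<Rightarrow> real \<Rightarrow> bool" where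
  "iter_lim 0 k F \<tau> L \<longleftrightarrow> F \<tau> = L"
| "iter_lim (Suc n) k F \<tau> L \<longleftrightarrow>
     (\<exists>G. (\<forall>\<^sub>F s in at_top. iter_lim n (Suc k) F (\<tau>(k := s)) (G s)) \<and> (G \<longlongrightarrow> L) at_top)"

end

theory Submission
  imports Defs
begin

text \<open>For independent \<open>A\<close> and \<open>B\<close>, \<open>\<phi>\<^sub>A(t) cnj(\<phi>\<^sub>B(t))\<close> is the characteristic function of
  \<open>A - B\<close>, so \<open>|\<phi>\<^sub>p - \<phi>\<^sub>q|\<^sup>2\<close> is a combination of the characteristic functions of the differences
  \<open>A - A'\<close>, \<open>B - B'\<close> and \<open>A - B\<close>. By Fubini, the normalised box integral of the characteristic
  function of a difference \<open>C\<close> is \<open>E[\<Prod>\<^sub>j sin (\<tau>\<^sub>j C\<^sub>j) / (\<tau>\<^sub>j C\<^sub>j)]\<close>. Each factor has modulus at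
  most 1 and tends to the indicator of \<open>C\<^sub>j = 0\<close>, so dominated convergence, one coordinate at a
  time, yields the iterated limit \<open>P(C = 0)\<close>; for \<open>C = A - B\<close> this is \<open>1 - E[1{A \<noteq> B}]\<close>.\<close>

definition cis_integral :: "real \<Rightarrow> real \<Rightarrow> complex" where
  "cis_integral s c = (\<integral>t. indicator {-s..s} t *\<^sub>R cis (t * c) \<partial>lborel)"

definition cis_mean :: "real \<Rightarrow> real \<Rightarrow> complex" where
  "cis_mean s c = (1 / (2 * s)) *\<^sub>R cis_integral s c"

lemma integrable_cis_interval:
  "integrable lborel (\<lambda>t. indicator {-s..s} t *\<^sub>R cis (t * c))"
  by (intro borel_integrable_compact compact_Icc continuous_intros)

lemma norm_cis_mean_le_1: "norm (cis_mean s c) \<le> 1"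
proof (cases "s > 0")
  case True
  have "norm (cis_integral s c) \<le> (\<integral>t. norm (indicator {-s..s} t *\<^sub>R cis (t * c)) \<partial>lborel)"
    unfolding cis_integral_def by (rule integral_norm_bound)
  also have "\<dots> = (\<integral>t. indicator {-s..s} t \<partial>lborel)"
    by (intro Bochner_Integration.integral_cong) (auto simp: indicator_def)
  also have "\<dots> = 2 * s"
    using True by simp
  finally show ?thesis
    using True by (simp add: cis_mean_def)
next
  case False
  then have "{-s..s} = {} \<or> s = 0"
    by auto
  then show ?thesis
    by (auto simp: cis_mean_def cis_integral_def)
qed

lemma cis_integral_0:
  assumes "0 \<le> s"
  shows "cis_integral s 0 = 2 * s"
proof -
  have "cis_integral s 0 = (\<integral>t. complex_of_real (indicator {-s..s} t) \<partial>lborel)"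
    unfolding cis_integral_def by (intro Bochner_Integration.integral_cong) (auto simp: indicator_def)
  with assms show ?thesis
    by simp
qed

lemma cis_integral_eq:
  assumes "c \<noteq> 0" "0 \<le> s"
  shows "cis_integral s c = (cis (s * c) - cis (-s * c)) / (\<i> * c)"
  unfolding cis_integral_def diff_divide_distrib
proof (rule integral_FTC_atLeastAtMost)
  fix x
  show "((\<lambda>t. cis (t * c) / (\<i> * c)) has_vector_derivative cis (x * c)) (at x within {-s..s})"
    using assms unfolding has_vector_derivative_def
    by (auto intro!: derivative_eq_intros ext simp: scaleR_conv_of_real field_simps)
qed (use assms in \<open>auto intro!: continuous_intros\<close>)

lemma norm_cis_integral_le:
  assumes "c \<noteq> 0" "0 \<le> s"
  shows "norm (cis_integral s c) \<le> 2 / \<bar>c\<bar>"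
proof -
  have "norm (cis (s * c) - cis (-s * c)) \<le> 2"
    using norm_triangle_ineq4[of "cis (s * c)" "cis (-s * c)"] by simp
  with assms show ?thesis
    by (simp add: cis_integral_eq norm_divide norm_mult divide_right_mono)
qed

lemma tendsto_cis_mean: "((\<lambda>s. cis_mean s c) \<longlongrightarrow> of_bool (c = 0)) at_top"
proof (cases "c = 0")
  case True
  have "\<forall>\<^sub>F s in at_top. cis_mean s c = 1"
    using eventually_gt_at_top[of "0::real"]
    by eventually_elim (simp add: True cis_mean_def cis_integral_0 scaleR_conv_of_real)
  then show ?thesis
    using True by (simp add: tendsto_eventually)
next
  case False
  have "\<forall>\<^sub>F s in at_top. norm (cis_mean s c) \<le> 1 / (s * \<bar>c\<bar>)"
    using eventually_gt_at_top[of "0::real"]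
  proof eventually_elim
    case (elim s)
    have "norm (cis_mean s c) = norm (cis_integral s c) / (2 * s)"
      using elim by (simp add: cis_mean_def)
    also have "\<dots> \<le> (2 / \<bar>c\<bar>) / (2 * s)"
      using elim False by (intro divide_right_mono norm_cis_integral_le) auto
    finally show ?case
      by (simp add: mult.commute)
  qed
  moreover have "((\<lambda>s. 1 / (s * \<bar>c\<bar>)) \<longlongrightarrow> 0) at_top"
    using False by (intro tendsto_divide_0[OF tendsto_const] filterlim_at_top_imp_at_infinity
        filterlim_at_top_mult_tendsto_pos[OF tendsto_const] filterlim_ident) auto
  ultimately show ?thesis
    using False by (simp add: Lim_null_comparison)
qed

lemma integral_pair_pmf_real:
  fixes h :: "'a \<times> 'b \<Rightarrow> real"
  assumes "\<And>x. \<bar>h x\<bar> \<le> C"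
  shows "(\<integral>x. h x \<partial>pair_pmf A B) = (\<integral>a. \<integral>b. h (a, b) \<partial>B \<partial>A)"
proof -
  have "(\<integral>x. h x \<partial>pair_pmf A B) = (\<integral>x. h x \<partial>(measure_pmf A \<bind> (\<lambda>a. measure_pmf (map_pmf (Pair a) B))))"
    by (simp add: pair_pmf_def map_pmf_def measure_pmf_bind)
  also have "\<dots> = (\<integral>a. (\<integral>x. h x \<partial>map_pmf (Pair a) B) \<partial>A)"
    using assms
    by (intro integral_bind[where K="count_space UNIV" and B=C and B'=1])
       (auto simp: measure_pmf_in_subprob_space measure_pmf.emeasure_space_1
             intro: measure_pmf.finite_measure_axioms)
  finally show ?thesis
    by simp
qed

text \<open>The library states \<open>integral_bind\<close> for real-valued functions only; the complex case is
  reduced to it through the bounded linear functionals \<open>Re\<close> and \<open>Im\<close>.\<close>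

lemma integral_pair_pmf:
  fixes h :: "'a \<times> 'b \<Rightarrow> complex"
  assumes h: "\<And>x. norm (h x) \<le> C"
  shows "(\<integral>x. h x \<partial>pair_pmf A B) = (\<integral>a. \<integral>b. h (a, b) \<partial>B \<partial>A)"
proof -
  have integrable: "integrable (measure_pmf M) f" if "\<And>x. norm (f x) \<le> C" for M and f :: "'c \<Rightarrow> complex"
    using that by (intro measure_pmf.integrable_const_bound[where B=C]) auto
  have inner_bound: "norm (\<integral>b. h (a, b) \<partial>B) \<le> C" for a
  proof -
    have "norm (\<integral>b. h (a, b) \<partial>B) \<le> (\<integral>b. norm (h (a, b)) \<partial>B)"
      by (rule integral_norm_bound)
    also have "\<dots> \<le> C"
      using h by (intro measure_pmf.integral_le_const integrable_norm integrable) auto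
    finally show ?thesis .
  qed
  have "T (\<integral>x. h x \<partial>pair_pmf A B) = T (\<integral>a. \<integral>b. h (a, b) \<partial>B \<partial>A)"
    if T: "bounded_linear T" for T :: "complex \<Rightarrow> real"
  proof -
    obtain K where K: "\<And>z. norm (T z) \<le> norm z * K" "K > 0"
      using bounded_linear.pos_bounded[OF T] by blast
    have "\<bar>T (h x)\<bar> \<le> C * K" for x
      using K h[of x] by (metis real_norm_def mult_right_mono order_trans less_le)
    then have "(\<integral>x. T (h x) \<partial>pair_pmf A B) = (\<integral>a. \<integral>b. T (h (a, b)) \<partial>B \<partial>A)"
      by (rule integral_pair_pmf_real)
    then show ?thesis
      using h inner_bound
      by (simp add: integral_bounded_linear[OF T, symmetric] integrable)
  qed
  from this[OF bounded_linear_Re] this[OF bounded_linear_Im] show ?thesis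
    by (rule complex_eqI)
qed

definition diff_pmf :: "'a::minus pmf \<Rightarrow> 'a pmf \<Rightarrow> 'a pmf" where
  "diff_pmf A B = map_pmf (\<lambda>(a, b). a - b) (pair_pmf A B)"

lemma inner_d_diff: "inner_d d t (a - b) = inner_d d t a - inner_d d t b"
  by (simp add: inner_d_def sum_subtractf right_diff_distrib)

lemma char_fun_mult_cnj:
  "char_fun d A t * cnj (char_fun d B t) = char_fun d (diff_pmf A B) t"
proof -
  have "char_fun d (diff_pmf A B) t = (\<integral>x. cis (inner_d d t (fst x) - inner_d d t (snd x)) \<partial>pair_pmf A B)"
    by (simp add: char_fun_def diff_pmf_def case_prod_unfold inner_d_diff)
  also have "\<dots> = (\<integral>a. \<integral>b. cis (inner_d d t a) * cnj (cis (inner_d d t b)) \<partial>B \<partial>A)"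
    by (subst integral_pair_pmf[where C=1]) (simp_all add: cis_cnj cis_mult)
  also have "\<dots> = char_fun d A t * cnj (char_fun d B t)"
    by (simp add: char_fun_def)
  finally show ?thesis ..
qed

abbreviation lborel_d :: "nat \<Rightarrow> (nat \<Rightarrow> real) measure" where
  "lborel_d d \<equiv> PiM {..<d} (\<lambda>_. lborel)"

definition box_cis :: "nat \<Rightarrow> (nat \<Rightarrow> real) \<Rightarrow> (nat \<Rightarrow> real) \<Rightarrow> (nat \<Rightarrow> real) \<Rightarrow> complex" where
  "box_cis d \<tau> c t = (\<Prod>j<d. indicator {-\<tau> j..\<tau> j} (t j) *\<^sub>R cis (t j * c j))"

lemma cis_sum: "finite I \<Longrightarrow> cis (\<Sum>j\<in>I. f j) = (\<Prod>j\<in>I. cis (f j))"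
  by (simp add: cis_conv_exp sum_distrib_left exp_sum)

lemma box_cis_eq:
  assumes "t \<in> PiE {..<d} (\<lambda>_. UNIV)"
  shows "box_cis d \<tau> c t = indicator (box_d d \<tau>) t *\<^sub>R cis (inner_d d t c)"
proof -
  have "indicator (box_d d \<tau>) t = (\<Prod>j<d. indicator {-\<tau> j..\<tau> j} (t j) :: real)"
    using assms by (auto simp: box_d_def indicator_def PiE_iff)
  then show ?thesis
    by (simp add: box_cis_def inner_d_def cis_sum scaleR_conv_of_real prod.distrib of_real_prod)
qed

lemma borel_measurable_cis [measurable]: "cis \<in> borel_measurable borel"
  by (intro borel_measurable_continuous_onI continuous_on_cis continuous_on_id)

lemma measurable_box_cis:
  "(\<lambda>(t, c). box_cis d \<tau> c t) \<in> borel_measurable (lborel_d d \<Otimes>\<^sub>M measure_pmf R)"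
proof -
  have [measurable]: "(\<lambda>z. snd z j) \<in> borel_measurable (lborel_d d \<Otimes>\<^sub>M measure_pmf R)" for j
    by (rule measurable_compose[OF measurable_snd]) simp
  show ?thesis
    unfolding box_cis_def by measurable
qed

lemma product_sigma_finite_lborel: "product_sigma_finite (\<lambda>_. lborel :: real measure)"
  by (intro product_sigma_finite.intro sigma_finite_lborel)

lemma pair_sigma_finite_lborel_d_pmf: "pair_sigma_finite (lborel_d d) (measure_pmf R)"
  by (intro pair_sigma_finite.intro measure_pmf.sigma_finite_measure_axioms
        product_sigma_finite.sigma_finite[OF product_sigma_finite_lborel]) simp

lemma integral_box_cis: "(\<integral>t. box_cis d \<tau> c t \<partial>lborel_d d) = (\<Prod>j<d. cis_integral (\<tau> j) (c j))"
  unfolding box_cis_def cis_integral_def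
  by (rule product_sigma_finite.product_integral_prod[OF product_sigma_finite_lborel])
     (auto intro: integrable_cis_interval)

lemma integrable_box_cis:
  "integrable (lborel_d d \<Otimes>\<^sub>M measure_pmf R) (\<lambda>(t, c). box_cis d \<tau> c t)"
proof -
  interpret pair_sigma_finite "lborel_d d" "measure_pmf R"
    by (rule pair_sigma_finite_lborel_d_pmf)
  have norm_box_cis: "norm (box_cis d \<tau> c t) = (\<Prod>j<d. indicator {-\<tau> j..\<tau> j} (t j))" for c t
    unfolding box_cis_def prod_norm[symmetric] by (simp add: indicator_def)
  have "integrable (lborel_d d) (\<lambda>t. \<Prod>j<d. indicator {-\<tau> j..\<tau> j} (t j) :: real)"
    by (intro product_sigma_finite.product_integrable_prod[OF product_sigma_finite_lborel])
       (auto simp: emeasure_lborel_Icc_eq)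
  moreover have "integrable (measure_pmf R) (\<lambda>c. box_cis d \<tau> c t)" for t
    by (rule measure_pmf.integrable_const_bound[where B=1])
       (auto simp: norm_box_cis indicator_def intro!: prod_le_1)
  ultimately show ?thesis
    by (intro Fubini_integrable measurable_box_cis) (auto simp: norm_box_cis)
qed

lemma box_char_fun_eq_integral_box_cis:
  assumes "t \<in> space (lborel_d d)"
  shows "indicator (box_d d \<tau>) t *\<^sub>R char_fun d R t = (\<integral>c. box_cis d \<tau> c t \<partial>R)"
  using assms by (simp add: box_cis_eq space_PiM char_fun_def)

lemma integrable_box_char_fun:
  "integrable (lborel_d d) (\<lambda>t. indicator (box_d d \<tau>) t *\<^sub>R char_fun d R t)"
proof -
  interpret pair_sigma_finite "lborel_d d" "measure_pmf R"
    by (rule pair_sigma_finite_lborel_d_pmf)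
  have "integrable (lborel_d d) (\<lambda>t. \<integral>c. box_cis d \<tau> c t \<partial>R)"
    using integrable_fst'[OF integrable_box_cis] by simp
  then show ?thesis
    by (rule Bochner_Integration.integrable_cong[OF refl, THEN iffD2, rotated])
       (simp add: box_char_fun_eq_integral_box_cis)
qed

lemma integral_box_char_fun:
  "(\<integral>t. indicator (box_d d \<tau>) t *\<^sub>R char_fun d R t \<partial>lborel_d d)
     = (\<integral>c. (\<Prod>j<d. cis_integral (\<tau> j) (c j)) \<partial>R)"
proof -
  interpret pair_sigma_finite "lborel_d d" "measure_pmf R"
    by (rule pair_sigma_finite_lborel_d_pmf)
  have "(\<integral>t. indicator (box_d d \<tau>) t *\<^sub>R char_fun d R t \<partial>lborel_d d)
      = (\<integral>t. \<integral>c. box_cis d \<tau> c t \<partial>R \<partial>lborel_d d)"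
    by (intro Bochner_Integration.integral_cong box_char_fun_eq_integral_box_cis refl)
  also have "\<dots> = (\<integral>c. \<integral>t. box_cis d \<tau> c t \<partial>lborel_d d \<partial>R)"
    using Fubini_integral[of "\<lambda>t c. box_cis d \<tau> c t"] integrable_box_cis by simp
  finally show ?thesis
    by (simp add: integral_box_cis)
qed

lemma box_average_char_fun:
  "(\<Prod>j<d. 1 / (2 * \<tau> j)) * Re (\<integral>t. indicator (box_d d \<tau>) t *\<^sub>R char_fun d R t \<partial>lborel_d d)
     = Re (\<integral>c. (\<Prod>j<d. cis_mean (\<tau> j) (c j)) \<partial>R)"
proof -
  have mean_eq: "(\<Prod>j<d. cis_mean (\<tau> j) (c j)) = (\<Prod>j<d. 1 / (2 * \<tau> j)) *\<^sub>R (\<Prod>j<d. cis_integral (\<tau> j) (c j))"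
    for c
    unfolding cis_mean_def scaleR_conv_of_real prod.distrib of_real_prod ..
  show ?thesis
    unfolding mean_eq integral_box_char_fun integral_scaleR_right by simp
qed

lemma box_average_sq_char_fun_diff:
  "(\<Prod>j<d. 1 / (2 * \<tau> j)) *
     (\<integral>t. indicator (box_d d \<tau>) t * (cmod (char_fun d p t - char_fun d q t))\<^sup>2 \<partial>lborel_d d)
   = Re (\<integral>c. (\<Prod>j<d. cis_mean (\<tau> j) (c j)) \<partial>diff_pmf p p)
     + Re (\<integral>c. (\<Prod>j<d. cis_mean (\<tau> j) (c j)) \<partial>diff_pmf q q)
     - 2 * Re (\<integral>c. (\<Prod>j<d. cis_mean (\<tau> j) (c j)) \<partial>diff_pmf p q)"
proof -
  define g where "g R t = indicator (box_d d \<tau>) t *\<^sub>R char_fun d R t" for R t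
  have integrable_g: "integrable (lborel_d d) (g R)" for R
    unfolding g_def by (rule integrable_box_char_fun)
  have pointwise: "indicator (box_d d \<tau>) t * (cmod (char_fun d p t - char_fun d q t))\<^sup>2
      = Re (g (diff_pmf p p) t + g (diff_pmf q q) t - 2 * g (diff_pmf p q) t)" for t
  proof -
    have norm_diff_sq: "(cmod (x - y))\<^sup>2 = Re (x * cnj x + y * cnj y - 2 * (x * cnj y))" for x y :: complex
      unfolding cmod_power2 by (simp add: power2_eq_square algebra_simps)
    show ?thesis
      unfolding norm_diff_sq char_fun_mult_cnj g_def by (simp add: algebra_simps)
  qed
  have "(\<integral>t. indicator (box_d d \<tau>) t * (cmod (char_fun d p t - char_fun d q t))\<^sup>2 \<partial>lborel_d d)
      = Re (\<integral>t. g (diff_pmf p p) t + g (diff_pmf q q) t - 2 * g (diff_pmf p q) t \<partial>lborel_d d)"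
    unfolding pointwise by (intro integral_Re integrable_g Bochner_Integration.integrable_add
        Bochner_Integration.integrable_diff integrable_mult_right)
  also have "\<dots> = Re (integral\<^sup>L (lborel_d d) (g (diff_pmf p p)))
      + Re (integral\<^sup>L (lborel_d d) (g (diff_pmf q q))) - 2 * Re (integral\<^sup>L (lborel_d d) (g (diff_pmf p q)))"
    by (simp add: integrable_g)
  finally show ?thesis
    by (simp add: right_diff_distrib distrib_left mult.left_commute[of _ 2] g_def[abs_def] box_average_char_fun
        del: prod_constant)
qed

lemma iter_lim_compose2:
  assumes "iter_lim n k F1 \<tau> L1" "iter_lim n k F2 \<tau> L2"
    and g: "\<And>f1 f2 :: real \<Rightarrow> real. \<And>l1 l2. (f1 \<longlongrightarrow> l1) at_top \<Longrightarrow> (f2 \<longlongrightarrow> l2) at_top \<Longrightarrow>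
              ((\<lambda>s. g (f1 s) (f2 s)) \<longlongrightarrow> g l1 l2) at_top"
  shows "iter_lim n k (\<lambda>\<tau>. g (F1 \<tau>) (F2 \<tau>)) \<tau> (g L1 L2)"
  using assms(1,2)
proof (induction n arbitrary: k \<tau> L1 L2)
  case 0
  then show ?case
    by simp
next
  case (Suc n)
  then obtain G1 G2 where
    G1: "\<forall>\<^sub>F s in at_top. iter_lim n (Suc k) F1 (\<tau>(k := s)) (G1 s)" "(G1 \<longlongrightarrow> L1) at_top" and
    G2: "\<forall>\<^sub>F s in at_top. iter_lim n (Suc k) F2 (\<tau>(k := s)) (G2 s)" "(G2 \<longlongrightarrow> L2) at_top"
    by auto
  have "\<forall>\<^sub>F s in at_top. iter_lim n (Suc k) (\<lambda>\<tau>. g (F1 \<tau>) (F2 \<tau>)) (\<tau>(k := s)) (g (G1 s) (G2 s))"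
    using G1(1) G2(1) by eventually_elim (rule Suc.IH)
  moreover have "((\<lambda>s. g (G1 s) (G2 s)) \<longlongrightarrow> g L1 L2) at_top"
    using G1(2) G2(2) by (rule g)
  ultimately show ?case
    by auto
qed

lemma tendsto_integral_cis_mean:
  fixes R :: "'a pmf" and f :: "'a \<Rightarrow> complex"
  assumes "\<And>x. norm (f x) \<le> 1"
  shows "((\<lambda>s. \<integral>x. cis_mean s (h x) * f x \<partial>R) \<longlongrightarrow> (\<integral>x. of_bool (h x = 0) * f x \<partial>R)) at_top"
proof (rule integral_dominated_convergence_at_top[where w = "\<lambda>_. 1"])
  show "AE x in R. ((\<lambda>s. cis_mean s (h x) * f x) \<longlongrightarrow> of_bool (h x = 0) * f x) at_top"
    by (intro AE_I2 tendsto_mult_right tendsto_cis_mean)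
  show "\<forall>\<^sub>F s in at_top. AE x in R. norm (cis_mean s (h x) * f x) \<le> 1"
    using assms by (auto simp: norm_mult intro!: always_eventually mult_le_one norm_cis_mean_le_1)
qed (simp_all add: measure_pmf.integrable_const)

lemma iter_lim_cis_mean:
  fixes R :: "(nat \<Rightarrow> real) pmf"
  assumes "n + k = d"
  shows "iter_lim n k (\<lambda>\<tau>. Re (\<integral>c. (\<Prod>j<d. cis_mean (\<tau> j) (c j)) \<partial>R)) \<tau>
           (Re (\<integral>c. (\<Prod>j<k. cis_mean (\<tau> j) (c j)) * of_bool (\<forall>j\<in>{k..<d}. c j = 0) \<partial>R))"
  using assms
proof (induction n arbitrary: k \<tau>)
  case 0
  then show ?case
    by simp
next
  case (Suc n)
  define f where "f c = (\<Prod>j<k. cis_mean (\<tau> j) (c j)) * of_bool (\<forall>j\<in>{Suc k..<d}. c j = 0)" for c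
  have inner: "iter_lim n (Suc k) (\<lambda>\<tau>. Re (\<integral>c. (\<Prod>j<d. cis_mean (\<tau> j) (c j)) \<partial>R)) (\<tau>(k := s))
          (Re (\<integral>c. cis_mean s (c k) * f c \<partial>R))" for s
  proof -
    have "(\<lambda>c. (\<Prod>j<Suc k. cis_mean ((\<tau>(k := s)) j) (c j)) * of_bool (\<forall>j\<in>{Suc k..<d}. c j = 0))
        = (\<lambda>c. cis_mean s (c k) * f c)"
      by (simp add: f_def mult_ac)
    with Suc.IH[of "Suc k" "\<tau>(k := s)"] Suc.prems show ?thesis
      by (simp only: add_Suc_right add_Suc)
  qed
  have limit_eq: "(\<lambda>c. of_bool (c k = 0) * f c)
      = (\<lambda>c. (\<Prod>j<k. cis_mean (\<tau> j) (c j)) * of_bool (\<forall>j\<in>{k..<d}. c j = 0))"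
  proof -
    have "{k..<d} = insert k {Suc k..<d}"
      using Suc.prems by auto
    then show ?thesis
      by (auto simp: f_def)
  qed
  have norm_f: "norm (f c) \<le> 1" for c
    by (simp add: f_def norm_mult prod_norm[symmetric] prod_le_1 mult_le_one norm_cis_mean_le_1)
  have "((\<lambda>s. Re (\<integral>c. cis_mean s (c k) * f c \<partial>R))
      \<longlongrightarrow> Re (\<integral>c. (\<Prod>j<k. cis_mean (\<tau> j) (c j)) * of_bool (\<forall>j\<in>{k..<d}. c j = 0) \<partial>R)) at_top"
    using tendsto_Re[OF tendsto_integral_cis_mean[where h="\<lambda>c. c k" and f=f and R=R, OF norm_f]]
    unfolding limit_eq .
  with inner show ?case
    by (auto intro!: exI[where x="\<lambda>s. Re (\<integral>c. cis_mean s (c k) * f c \<partial>R)"])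
qed

lemma iter_lim_cis_mean_prob:
  fixes R :: "(nat \<Rightarrow> real) pmf"
  shows "iter_lim d 0 (\<lambda>\<tau>. Re (\<integral>c. (\<Prod>j<d. cis_mean (\<tau> j) (c j)) \<partial>R)) \<tau>
           (measure_pmf.prob R {c. \<forall>j<d. c j = 0})"
proof -
  have "(\<lambda>c. (\<Prod>j<0. cis_mean (\<tau> j) (c j)) * of_bool (\<forall>j\<in>{0..<d}. c j = 0))
      = (\<lambda>c. of_real (indicator {c. \<forall>j<d. c j = 0} c))"
    by (auto simp: fun_eq_iff indicator_def atLeast0LessThan)
  then show ?thesis
    using iter_lim_cis_mean[of d 0 d R \<tau>] by simp
qed

lemma prob_diff_pmf_eq_0:
  fixes A B :: "(nat \<Rightarrow> real) pmf"
  assumes "set_pmf A \<subseteq> PiE {..<d} (\<lambda>_. UNIV)" "set_pmf B \<subseteq> PiE {..<d} (\<lambda>_. UNIV)"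
  shows "measure_pmf.prob (diff_pmf A B) {c. \<forall>j<d. c j = 0}
           = 1 - measure_pmf.expectation (pair_pmf A B) (\<lambda>(a, b). if a \<noteq> b then 1 else 0)"
proof -
  have "measure_pmf.prob (diff_pmf A B) {c. \<forall>j<d. c j = 0}
      = measure_pmf.prob (pair_pmf A B) {(a, b). \<forall>j<d. a j = b j}"
    by (simp add: diff_pmf_def vimage_def case_prod_unfold right_minus_eq)
  also have "\<dots> = measure_pmf.prob (pair_pmf A B) (- {(a, b). a \<noteq> b})"
  proof -
    have "a = b" if "a \<in> set_pmf A" "b \<in> set_pmf B" "\<forall>j<d. a j = b j" for a b
      using that assms by (intro PiE_ext[of a "{..<d}" "\<lambda>_. UNIV" b]) auto
    then show ?thesis
      by (intro measure_prob_cong_0) (force simp: pmf_pair set_pmf_iff)+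
  qed
  also have "\<dots> = 1 - measure_pmf.expectation (pair_pmf A B) (indicator {(a, b). a \<noteq> b})"
    using measure_pmf.prob_compl[of "{(a, b). a \<noteq> b}" "pair_pmf A B"] by (simp add: Compl_eq_Diff_UNIV)
  also have "indicator {(a, b). a \<noteq> b} = (\<lambda>(a, b). if a \<noteq> b then 1 else 0 :: real)"
    by (auto simp: indicator_def)
  finally show ?thesis .
qed

theorem mainTheorem2:
  fixes d :: nat and p q :: "(nat \<Rightarrow> real) pmf"
  assumes "set_pmf p \<subseteq> PiE {..<d} (\<lambda>_. UNIV)"
      and "set_pmf q \<subseteq> PiE {..<d} (\<lambda>_. UNIV)"
  shows "iter_lim d 0
           (\<lambda>\<tau>. (\<Prod>j<d. 1 / (2 * \<tau> j)) *
                 (\<integral>t. indicator (box_d d \<tau>) t * (cmod (char_fun d p t - char_fun d q t))\<^sup>2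
                   \<partial>(PiM {..<d} (\<lambda>_. lborel))))
           (\<lambda>_. 0) (eps01 p q)"
proof -
  let ?P = "\<lambda>A B. measure_pmf.prob (diff_pmf A B) {c. \<forall>j<d. c j = 0}"
  have "eps01 p q = ?P p p + ?P q q - 2 * ?P p q"
    using assms by (simp add: eps01_def prob_diff_pmf_eq_0)
  then show ?thesis
    unfolding box_average_sq_char_fun_diff
    by (auto intro!: iter_lim_compose2[where g="\<lambda>x y. x - 2 * y"] iter_lim_compose2[where g="(+)"]
        iter_lim_cis_mean_prob tendsto_intros)
qed

end
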